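(* Let $n\ge 6$ and let $\mathfrak g$ be an $n$-dimensional filiform Lie algebra with associated triple $(n-2,n-2,n)$. Then there exist an adapted basis $\{e_1,\dots,e_n\}$ of $\mathfrak g$ and complex numbers $\alpha,\gamma,\beta$ with $\alpha\neq0$ such that the nonzero brackets $[e_a,e_b]$, $a<b$, are exactly given by $[e_1,e_h]=e_{h-1}$ ($3\le h\le n$), $[e_{n-2},e_{n-1}]=\alpha e_2$, $[e_{n-2},e_n]=\alpha e_3+\gamma e_2$, $[e_{n-1},e_n]=\alpha e_4+\gamma e_3+\beta e_2$, all other brackets of basis elements with $a<b$ being zero. Conversely, for every $\alpha\in\mathbb C\setminus\{0\}$ and $\gamma,\beta\in\mathbb C$, these brackets define a Lie algebra which is filiform with associated triple $(n-2,n-2,n)$ (i.e. the Jacobi identity imposes no polynomial relation on $\alpha,\gamma,\beta$, and the only open condition is $\alpha\neq0$, equivalent to $[C^2\mathfrak g,C^3\mathfrak g]\neq\{0\}$).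
   Context: All Lie algebras are over $\mathbb C$; $C^1\mathfrak g=\mathfrak g$, $C^k\mathfrak g=[C^{k-1}\mathfrak g,\mathfrak g]$. A Lie algebra is filiform if $\dim\mathfrak g=n\ge2$ and $\dim C^k\mathfrak g=n-k$ for $2\le k\le n$. An adapted basis of a filiform $\mathfrak g$ is a basis $\{e_1,\dots,e_n\}$ with $[e_1,e_h]=e_{h-1}$ ($3\le h\le n$), $[e_2,e_h]=0$ ($1\le h\le n$), $[e_3,e_h]=0$ ($2\le h\le n$). For a non-model filiform $\mathfrak g$ (not isomorphic to the algebra with $[e_1,e_h]=e_{h-1}$ and other brackets zero), $z_1=\min\{k\ge4:[e_k,e_n]\ne0\}$ and $z_2=\min\{k\ge4:[e_k,e_{k+1}]\ne0\}$ computed in any adapted basis are isomorphism invariants; $(z_1,z_2,n)$ is the associated triple. *)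

theory Defs
  imports Complex_Main
begin

text \<open>An n-dimensional complex vector space is modelled concretely as the space of
  functions nat => complex supported in {1..n} (i.e. C^n).  Every n-dimensional complex Lie algebra is isomorphic to one
  of this form.\<close>

type_synonym cvec = "nat \<Rightarrow> complex"

definition vsp :: "nat \<Rightarrow> cvec set" where
  "vsp n = {v. \<forall>i. v i \<noteq> 0 \<longrightarrow> 1 \<le> i \<and> i \<le> n}"

definition vzero :: cvec where "vzero = (\<lambda>_. 0)"
definition vadd :: "cvec \<Rightarrow> cvec \<Rightarrow> cvec" where "vadd x y = (\<lambda>i. x i + y i)"
definition smul :: "complex \<Rightarrow> cvec \<Rightarrow> cvec" where "smul c x = (\<lambda>i. c * x i)"

definition lcomb :: "('a \<Rightarrow> complex) \<Rightarrow> ('a \<Rightarrow> cvec) \<Rightarrow> 'a set \<Rightarrow> cvec" where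
  "lcomb c e F = (\<lambda>j. \<Sum>x\<in>F. c x * e x j)"

definition cspan :: "cvec set \<Rightarrow> cvec set" where
  "cspan S = {v. \<exists>F c. finite F \<and> F \<subseteq> S \<and> v = lcomb c id F}"

definition cindep :: "cvec set \<Rightarrow> bool" where
  "cindep S \<longleftrightarrow> (\<forall>F c. finite F \<and> F \<subseteq> S \<and> lcomb c id F = vzero \<longrightarrow> (\<forall>x\<in>F. c x = 0))"

definition has_cdim :: "cvec set \<Rightarrow> nat \<Rightarrow> bool" where
  "has_cdim W d \<longleftrightarrow> (\<exists>Bs. finite Bs \<and> card Bs = d \<and> Bs \<subseteq> W \<and> cindep Bs \<and> cspan Bs = W)"

definition lie_alg :: "nat \<Rightarrow> (cvec \<Rightarrow> cvec \<Rightarrow> cvec) \<Rightarrow> bool" where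
  "lie_alg n B \<longleftrightarrow>
     (\<forall>x\<in>vsp n. \<forall>y\<in>vsp n. B x y \<in> vsp n) \<and>
     (\<forall>x\<in>vsp n. \<forall>y\<in>vsp n. \<forall>z\<in>vsp n. B (vadd x y) z = vadd (B x z) (B y z)) \<and>
     (\<forall>x\<in>vsp n. \<forall>y\<in>vsp n. \<forall>z\<in>vsp n. B z (vadd x y) = vadd (B z x) (B z y)) \<and>
     (\<forall>c. \<forall>x\<in>vsp n. \<forall>y\<in>vsp n. B (smul c x) y = smul c (B x y)) \<and>
     (\<forall>c. \<forall>x\<in>vsp n. \<forall>y\<in>vsp n. B x (smul c y) = smul c (B x y)) \<and>
     (\<forall>x\<in>vsp n. B x x = vzero) \<and>
     (\<forall>x\<in>vsp n. \<forall>y\<in>vsp n. \<forall>z\<in>vsp n.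
        vadd (B x (B y z)) (vadd (B y (B z x)) (B z (B x y))) = vzero)"

text \<open>Lower central series: lcs n B k = C^k g (with C^1 g = g, C^k g = [C^(k-1) g, g]).\<close>
fun lcs :: "nat \<Rightarrow> (cvec \<Rightarrow> cvec \<Rightarrow> cvec) \<Rightarrow> nat \<Rightarrow> cvec set" where
  "lcs n B 0 = vsp n"
| "lcs n B (Suc 0) = vsp n"
| "lcs n B (Suc (Suc k)) = cspan {B x y | x y. x \<in> lcs n B (Suc k) \<and> y \<in> vsp n}"

definition filiform :: "nat \<Rightarrow> (cvec \<Rightarrow> cvec \<Rightarrow> cvec) \<Rightarrow> bool" where
  "filiform n B \<longleftrightarrow> n \<ge> 2 \<and> lie_alg n B \<and>
     (\<forall>k. 2 \<le> k \<and> k \<le> n \<longrightarrow> has_cdim (lcs n B k) (n - k))"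

text \<open>Bracket on C^n given by structure constants c i j k: [u_i,u_j] = sum_k c i j k u_k
  on the standard basis u_1..u_n.\<close>
definition sc_bracket :: "nat \<Rightarrow> (nat \<Rightarrow> nat \<Rightarrow> nat \<Rightarrow> complex) \<Rightarrow> cvec \<Rightarrow> cvec \<Rightarrow> cvec" where
  "sc_bracket n c x y = (\<lambda>k. if 1 \<le> k \<and> k \<le> n
       then (\<Sum>i\<in>{1..n}. \<Sum>j\<in>{1..n}. x i * y j * c i j k) else 0)"

definition antisym_sc :: "(nat \<Rightarrow> nat \<Rightarrow> nat \<Rightarrow> complex) \<Rightarrow> nat \<Rightarrow> nat \<Rightarrow> nat \<Rightarrow> complex" where
  "antisym_sc s i j k = (if i < j then s i j k else if j < i then - s j i k else 0)"

definition model_spec :: "nat \<Rightarrow> nat \<Rightarrow> nat \<Rightarrow> complex" where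
  "model_spec a b k = (if a = 1 \<and> 3 \<le> b \<and> k = b - 1 then 1 else 0)"

definition model_br :: "nat \<Rightarrow> cvec \<Rightarrow> cvec \<Rightarrow> cvec" where
  "model_br n = sc_bracket n (antisym_sc model_spec)"

definition lie_iso :: "nat \<Rightarrow> (cvec \<Rightarrow> cvec \<Rightarrow> cvec) \<Rightarrow> (cvec \<Rightarrow> cvec \<Rightarrow> cvec) \<Rightarrow> (cvec \<Rightarrow> cvec) \<Rightarrow> bool" where
  "lie_iso n B B' f \<longleftrightarrow> bij_betw f (vsp n) (vsp n) \<and>
     (\<forall>x\<in>vsp n. \<forall>y\<in>vsp n. f (vadd x y) = vadd (f x) (f y)) \<and>
     (\<forall>c. \<forall>x\<in>vsp n. f (smul c x) = smul c (f x)) \<and>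
     (\<forall>x\<in>vsp n. \<forall>y\<in>vsp n. f (B x y) = B' (f x) (f y))"

definition non_model :: "nat \<Rightarrow> (cvec \<Rightarrow> cvec \<Rightarrow> cvec) \<Rightarrow> bool" where
  "non_model n B \<longleftrightarrow> \<not> (\<exists>f. lie_iso n B (model_br n) f)"

definition adapted_basis :: "nat \<Rightarrow> (cvec \<Rightarrow> cvec \<Rightarrow> cvec) \<Rightarrow> (nat \<Rightarrow> cvec) \<Rightarrow> bool" where
  "adapted_basis n B e \<longleftrightarrow>
     (\<forall>i\<in>{1..n}. e i \<in> vsp n) \<and> inj_on e {1..n} \<and>
     cindep (e ` {1..n}) \<and> cspan (e ` {1..n}) = vsp n \<and>
     (\<forall>h. 3 \<le> h \<and> h \<le> n \<longrightarrow> B (e 1) (e h) = e (h - 1)) \<and>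
     (\<forall>h. 1 \<le> h \<and> h \<le> n \<longrightarrow> B (e 2) (e h) = vzero) \<and>
     (\<forall>h. 2 \<le> h \<and> h \<le> n \<longrightarrow> B (e 3) (e h) = vzero)"

definition is_z1 :: "nat \<Rightarrow> (cvec \<Rightarrow> cvec \<Rightarrow> cvec) \<Rightarrow> (nat \<Rightarrow> cvec) \<Rightarrow> nat \<Rightarrow> bool" where
  "is_z1 n B e m \<longleftrightarrow> 4 \<le> m \<and> B (e m) (e n) \<noteq> vzero \<and>
     (\<forall>k. 4 \<le> k \<and> k < m \<longrightarrow> B (e k) (e n) = vzero)"

definition is_z2 :: "nat \<Rightarrow> (cvec \<Rightarrow> cvec \<Rightarrow> cvec) \<Rightarrow> (nat \<Rightarrow> cvec) \<Rightarrow> nat \<Rightarrow> bool" where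
  "is_z2 n B e m \<longleftrightarrow> 4 \<le> m \<and> B (e m) (e (m + 1)) \<noteq> vzero \<and>
     (\<forall>k. 4 \<le> k \<and> k < m \<longrightarrow> B (e k) (e (k + 1)) = vzero)"

text \<open>Associated triple (z1,z2,n) of a non-model filiform algebra (computed in an adapted
  basis; it is independent of the choice by the standing facts of the paper).\<close>
definition assoc_triple :: "nat \<Rightarrow> (cvec \<Rightarrow> cvec \<Rightarrow> cvec) \<Rightarrow> nat \<Rightarrow> nat \<Rightarrow> bool" where
  "assoc_triple n B a b \<longleftrightarrow> filiform n B \<and> non_model n B \<and>
     (\<exists>e. adapted_basis n B e \<and> is_z1 n B e a \<and> is_z2 n B e b)"

text \<open>Coefficient of e_k in [e_a,e_b] (a < b) in the normal form of the theorem.\<close>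
definition thm_spec :: "nat \<Rightarrow> complex \<Rightarrow> complex \<Rightarrow> complex \<Rightarrow> nat \<Rightarrow> nat \<Rightarrow> nat \<Rightarrow> complex" where
  "thm_spec n \<alpha> \<gamma> \<beta> a b k =
     (if a = 1 \<and> 3 \<le> b \<and> k = b - 1 then 1
      else if a = n - 2 \<and> b = n - 1 then (if k = 2 then \<alpha> else 0)
      else if a = n - 2 \<and> b = n then (if k = 3 then \<alpha> else if k = 2 then \<gamma> else 0)
      else if a = n - 1 \<and> b = n then
        (if k = 4 then \<alpha> else if k = 3 then \<gamma> else if k = 2 then \<beta> else 0)
      else 0)"

end

theory Submission
  imports Defs
begin

text \<open>
  In an adapted basis, ad e_1 lowers indices (e_h \<mapsto> e_{h-1}), and the Jacobi identity makes it a
  derivation: [e_1, [e_k, e_j]] = [e_{k-1}, e_j] + [e_k, e_{j-1}].  Since z_1 = n - 2, [e_k, e_n] = 0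
  for 2 \<le> k \<le> n - 3, and descending induction on j gives [e_k, e_j] = 0 for all such k < j.  The
  three remaining brackets X = [e_{n-2}, e_{n-1}], Y = [e_{n-2}, e_n], Z = [e_{n-1}, e_n] satisfy
  [e_1, X] = 0, [e_1, Y] = X, [e_1, Z] = Y and have no e_1-component (ad e_3 kills them), which
  forces X = \<alpha> e_2, Y = \<alpha> e_3 + \<gamma> e_2, Z = \<alpha> e_4 + \<gamma> e_3 + \<beta> e_2; and z_2 = n - 2 means \<alpha> \<noteq> 0.

  Conversely, the Jacobi identity for these brackets is checked coordinatewise, the lower central
  series is C^k = <e_2, ..., e_{n+1-k}>, and the algebra is not the model one: there [g, g] is
  abelian, whereas here [[e_{n-1}, e_1], [e_n, e_1]] = [e_{n-2}, e_{n-1}] = \<alpha> e_2 \<noteq> 0.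
\<close>

section \<open>Linear combinations in C^n\<close>

lemma lcomb_empty [simp]: "lcomb c e {} = vzero"
  unfolding lcomb_def vzero_def by simp

lemma lcomb_insert:
  "finite F \<Longrightarrow> a \<notin> F \<Longrightarrow> lcomb c e (insert a F) = vadd (smul (c a) (e a)) (lcomb c e F)"
  unfolding lcomb_def vadd_def smul_def by simp

lemma lcomb_cong: "(\<And>k. k \<in> F \<Longrightarrow> c k = d k) \<Longrightarrow> lcomb c e F = lcomb d e F"
  unfolding lcomb_def by (intro ext sum.cong) auto

lemma lcomb_eq_vzero: "(\<And>k. k \<in> F \<Longrightarrow> c k = 0) \<Longrightarrow> lcomb c e F = vzero"
  unfolding lcomb_def vzero_def by (intro ext sum.neutral) auto

lemma lcomb_delta: "finite F \<Longrightarrow> j \<in> F \<Longrightarrow> lcomb (\<lambda>k. if k = j then 1 else 0) e F = e j"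
  unfolding lcomb_def by (simp add: if_distrib[where f = "\<lambda>c. c * _"] sum.delta' cong: if_cong)

lemma lcomb_diff: "lcomb (\<lambda>k. c k - d k) e F = (\<lambda>j. lcomb c e F j - lcomb d e F j)"
  unfolding lcomb_def by (simp add: algebra_simps sum_subtractf)

lemma lcomb_reindex: "inj_on e J \<Longrightarrow> lcomb c e J = lcomb (\<lambda>x. c (inv_into J e x)) id (e ` J)"
  unfolding lcomb_def by (simp add: sum.reindex)

lemma lcomb_in_cspan:
  assumes "finite J" "inj_on e J" "e ` J \<subseteq> S"
  shows "lcomb c e J \<in> cspan S"
  unfolding cspan_def using assms lcomb_reindex[OF assms(2)] by blast

lemma vzero_in_vsp [simp]: "vzero \<in> vsp n"
  unfolding vsp_def vzero_def by simp

lemma smul_in_vsp: "x \<in> vsp n \<Longrightarrow> smul c x \<in> vsp n"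
  unfolding vsp_def smul_def by auto

lemma smul_zero_left: "smul 0 x = vzero"
  unfolding smul_def vzero_def by simp

lemma vadd_vzero_left [simp]: "vadd vzero x = x"
  and vadd_vzero_right [simp]: "vadd x vzero = x"
  unfolding vadd_def vzero_def by simp_all

lemma vadd_in_vsp:
  assumes "x \<in> vsp n" "y \<in> vsp n"
  shows "vadd x y \<in> vsp n"
proof -
  have "x i = 0" "y i = 0" if "\<not> (1 \<le> i \<and> i \<le> n)" for i
    using assms that unfolding vsp_def by blast+
  then have "vadd x y i = 0" if "\<not> (1 \<le> i \<and> i \<le> n)" for i
    using that by (simp add: vadd_def)
  then show ?thesis unfolding vsp_def by blast
qed

lemma lcomb_apply_eq_0: "(\<And>x. x \<in> F \<Longrightarrow> e x i = 0) \<Longrightarrow> lcomb c e F i = 0"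
  unfolding lcomb_def by simp

lemma lcomb_in_vsp:
  assumes "\<And>x. x \<in> F \<Longrightarrow> e x \<in> vsp n"
  shows "lcomb c e F \<in> vsp n"
proof -
  have "lcomb c e F i = 0" if "\<not> (1 \<le> i \<and> i \<le> n)" for i
    using assms that unfolding vsp_def by (intro lcomb_apply_eq_0) blast
  then show ?thesis unfolding vsp_def by blast
qed

lemma basis_coords_exist:
  fixes n :: nat
  assumes inj: "inj_on e {1..n}" and span: "cspan (e ` {1..n}) = vsp n" and v: "v \<in> vsp n"
  shows "\<exists>c. v = lcomb c e {1..n}"
proof -
  obtain F c where F: "F \<subseteq> e ` {1..n}" and v_eq: "v = lcomb c id F"
    using v span unfolding cspan_def by blast
  have "lcomb (\<lambda>k. if e k \<in> F then c (e k) else 0) e {1..n} = lcomb c id F"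
  proof
    fix j
    have "lcomb (\<lambda>k. if e k \<in> F then c (e k) else 0) e {1..n} j
        = (\<Sum>x\<in>e ` {1..n}. if x \<in> F then c x * x j else 0)"
      unfolding lcomb_def using inj by (simp add: sum.reindex if_distrib[where f = "\<lambda>c. c * _"] cong: if_cong)
    also have "\<dots> = (\<Sum>x\<in>e ` {1..n} \<inter> F. c x * x j)"
      by (simp add: sum.inter_restrict)
    also have "e ` {1..n} \<inter> F = F" using F by blast
    finally show "lcomb (\<lambda>k. if e k \<in> F then c (e k) else 0) e {1..n} j = lcomb c id F j"
      unfolding lcomb_def by simp
  qed
  then show ?thesis using v_eq by metis
qed

lemma basis_coord_eq_0:
  fixes n :: nat
  assumes inj: "inj_on e {1..n}" and indep: "cindep (e ` {1..n})"
    and zero: "lcomb c e {1..n} = vzero" and k: "k \<in> {1..n}"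
  shows "c k = 0"
proof -
  have "lcomb (\<lambda>x. c (inv_into {1..n} e x)) id (e ` {1..n}) = vzero"
    using zero lcomb_reindex[OF inj] by simp
  then have "c (inv_into {1..n} e (e k)) = 0"
    using indep[unfolded cindep_def, rule_format, of "e ` {1..n}" "\<lambda>x. c (inv_into {1..n} e x)" "e k"] k
    by simp
  then show ?thesis using inv_into_f_f[OF inj k] by simp
qed

lemma basis_coords_unique:
  fixes n :: nat
  assumes "inj_on e {1..n}" "cindep (e ` {1..n})"
    and "lcomb c e {1..n} = lcomb d e {1..n}" and "k \<in> {1..n}"
  shows "c k = d k"
proof -
  have "lcomb (\<lambda>k. c k - d k) e {1..n} = vzero"
    unfolding lcomb_diff assms(3) vzero_def by simp
  then have "c k - d k = 0" using basis_coord_eq_0[OF assms(1,2) _ assms(4)] by blast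
  then show ?thesis by simp
qed

section \<open>Elementary consequences of the Lie algebra axioms\<close>

context
  fixes n :: nat and B :: "cvec \<Rightarrow> cvec \<Rightarrow> cvec"
  assumes lie: "lie_alg n B"
begin

lemma lie_bracket_in_vsp: "x \<in> vsp n \<Longrightarrow> y \<in> vsp n \<Longrightarrow> B x y \<in> vsp n"
  using lie unfolding lie_alg_def by simp

lemma lie_add_left: "x \<in> vsp n \<Longrightarrow> y \<in> vsp n \<Longrightarrow> z \<in> vsp n \<Longrightarrow> B (vadd x y) z = vadd (B x z) (B y z)"
  using lie unfolding lie_alg_def by simp

lemma lie_add_right: "x \<in> vsp n \<Longrightarrow> y \<in> vsp n \<Longrightarrow> z \<in> vsp n \<Longrightarrow> B z (vadd x y) = vadd (B z x) (B z y)"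
  using lie unfolding lie_alg_def by simp

lemma lie_smul_right: "x \<in> vsp n \<Longrightarrow> y \<in> vsp n \<Longrightarrow> B x (smul c y) = smul c (B x y)"
  using lie unfolding lie_alg_def by simp

lemma lie_alternating: "x \<in> vsp n \<Longrightarrow> B x x = vzero"
  using lie unfolding lie_alg_def by simp

lemma lie_zero_right: "x \<in> vsp n \<Longrightarrow> B x vzero = vzero"
  using lie_smul_right[of x vzero 0] by (simp add: smul_zero_left)

lemma lie_antisym:
  assumes x: "x \<in> vsp n" and y: "y \<in> vsp n"
  shows "B y x i = - B x y i"
proof -
  have xy: "vadd x y \<in> vsp n" using x y by (rule vadd_in_vsp)
  have "vzero = B (vadd x y) (vadd x y)" using lie_alternating[OF xy] by simp
  also have "\<dots> = vadd (vadd (B x x) (B x y)) (vadd (B y x) (B y y))"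
    using lie_add_left[OF x y xy] lie_add_right[OF x y x] lie_add_right[OF x y y] by simp
  finally have "vadd (B x y) (B y x) = vzero"
    using lie_alternating x y by (simp add: vadd_def vzero_def)
  then have "B x y i + B y x i = 0" unfolding vadd_def vzero_def by meson
  then show ?thesis by (simp add: eq_neg_iff_add_eq_0 add.commute)
qed

lemma lie_jacobi:
  assumes "x \<in> vsp n" "y \<in> vsp n" "z \<in> vsp n"
  shows "B x (B y z) i + (B y (B z x) i + B z (B x y) i) = 0"
proof -
  have "vadd (B x (B y z)) (vadd (B y (B z x)) (B z (B x y))) = vzero"
    using lie assms unfolding lie_alg_def by simp
  then show ?thesis unfolding vadd_def vzero_def by meson
qed

lemma lie_lcomb_right:
  assumes x: "x \<in> vsp n" and F: "finite F" and e: "\<And>k. k \<in> F \<Longrightarrow> e k \<in> vsp n"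
  shows "B x (lcomb c e F) = lcomb c (\<lambda>k. B x (e k)) F"
  using F e
proof (induction F rule: finite_induct)
  case empty
  then show ?case using lie_zero_right[OF x] by simp
next
  case (insert a F)
  have ea: "e a \<in> vsp n" and lF: "lcomb c e F \<in> vsp n"
    using insert by (auto intro: lcomb_in_vsp)
  have "B x (lcomb c e (insert a F)) = vadd (B x (smul (c a) (e a))) (B x (lcomb c e F))"
    using insert lie_add_right[OF smul_in_vsp[OF ea] lF x] by (simp add: lcomb_insert)
  then show ?case using insert lie_smul_right[OF x ea] by (simp add: lcomb_insert)
qed

end

section \<open>The standard basis and coordinate subspaces\<close>

definition unit_vec :: "nat \<Rightarrow> cvec" where
  "unit_vec a = (\<lambda>i. if i = a then 1 else 0)"

definition supported_in :: "nat \<Rightarrow> nat \<Rightarrow> cvec set" where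
  "supported_in a b = {v. \<forall>i. v i \<noteq> 0 \<longrightarrow> a \<le> i \<and> i \<le> b}"

lemma vsp_eq_supported_in: "vsp n = supported_in 1 n"
  unfolding vsp_def supported_in_def by simp

lemma unit_vec_in_supported_in: "j \<in> {a..b} \<Longrightarrow> unit_vec j \<in> supported_in a b"
  unfolding unit_vec_def supported_in_def by auto

lemma unit_vec_in_vsp: "1 \<le> i \<Longrightarrow> i \<le> n \<Longrightarrow> unit_vec i \<in> vsp n"
  unfolding vsp_eq_supported_in by (rule unit_vec_in_supported_in) simp

lemma inj_on_unit_vec: "inj_on unit_vec A"
  by (rule inj_onI) (metis unit_vec_def zero_neq_one)

lemma supported_in_eq_lcomb_unit_vec: "v \<in> supported_in a b \<Longrightarrow> v = lcomb v unit_vec {a..b}"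
proof
  fix i assume v: "v \<in> supported_in a b"
  have "lcomb v unit_vec {a..b} i = (if i \<in> {a..b} then v i else 0)"
    unfolding lcomb_def unit_vec_def by (simp add: if_distrib[where f = "\<lambda>x. _ * x"] sum.delta cong: if_cong)
  then show "v i = lcomb v unit_vec {a..b} i" using v unfolding supported_in_def by auto
qed

lemma cspan_subset_supported_in:
  assumes "S \<subseteq> supported_in a b"
  shows "cspan S \<subseteq> supported_in a b"
proof
  fix v assume "v \<in> cspan S"
  then obtain F c where F: "F \<subseteq> S" and v_eq: "v = lcomb c id F" unfolding cspan_def by blast
  have "v i = 0" if "\<not> (a \<le> i \<and> i \<le> b)" for i
    using F assms that unfolding v_eq supported_in_def by (intro lcomb_apply_eq_0) auto
  then show "v \<in> supported_in a b" unfolding supported_in_def by blast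
qed

lemma supported_in_subset_cspan:
  assumes "unit_vec ` {a..b} \<subseteq> S"
  shows "supported_in a b \<subseteq> cspan S"
proof
  fix v assume "v \<in> supported_in a b"
  then have "v = lcomb v unit_vec {a..b}" by (rule supported_in_eq_lcomb_unit_vec)
  also have "\<dots> \<in> cspan S" using assms by (intro lcomb_in_cspan inj_on_unit_vec) auto
  finally show "v \<in> cspan S" .
qed

lemma cspan_unit_vec: "cspan (unit_vec ` {a..b}) = supported_in a b"
  using unit_vec_in_supported_in
  by (intro equalityI cspan_subset_supported_in supported_in_subset_cspan) auto

lemma cindep_unit_vec: "cindep (unit_vec ` A)"
  unfolding cindep_def
proof (intro allI impI ballI)
  fix F c x
  assume F: "finite F \<and> F \<subseteq> unit_vec ` A \<and> lcomb c id F = vzero" and x: "x \<in> F"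
  then obtain j where j: "x = unit_vec j" by blast
  have "(\<Sum>y\<in>F. c y * y j) = (\<Sum>y\<in>F. if y = x then c y else 0)"
  proof (rule sum.cong)
    fix y assume "y \<in> F"
    then obtain j' where "y = unit_vec j'" using F by blast
    then show "c y * y j = (if y = x then c y else 0)"
      using j unfolding unit_vec_def by (auto simp: fun_eq_iff)
  qed simp
  also have "\<dots> = c x" using F x by (simp add: sum.delta')
  finally have "c x = lcomb c id F j" unfolding lcomb_def by simp
  then show "c x = 0" using F unfolding vzero_def by simp
qed

lemma has_cdim_supported_in: "has_cdim (supported_in a b) (b + 1 - a)"
  unfolding has_cdim_def
  using inj_on_unit_vec unit_vec_in_supported_in cindep_unit_vec cspan_unit_vec
  by (intro exI[of _ "unit_vec ` {a..b}"]) (auto simp: card_image)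

lemma sc_bracket_in_vsp: "sc_bracket n c x y \<in> vsp n"
  unfolding sc_bracket_def vsp_def by auto

lemma sc_bracket_bilinear:
  "sc_bracket n c (vadd x y) z = vadd (sc_bracket n c x z) (sc_bracket n c y z)"
  "sc_bracket n c z (vadd x y) = vadd (sc_bracket n c z x) (sc_bracket n c z y)"
  "sc_bracket n c (smul a x) y = smul a (sc_bracket n c x y)"
  "sc_bracket n c x (smul a y) = smul a (sc_bracket n c x y)"
  unfolding sc_bracket_def vadd_def smul_def
  by (auto simp: fun_eq_iff algebra_simps sum.distrib sum_distrib_left)

lemma sc_bracket_unit_vec:
  assumes "a \<in> {1..n}" "b \<in> {1..n}"
  shows "sc_bracket n c (unit_vec a) (unit_vec b) = (\<lambda>k. if 1 \<le> k \<and> k \<le> n then c a b k else 0)"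
proof
  fix k
  have entry: "unit_vec a i * unit_vec b j * c i j k = (if i = a then if j = b then c a b k else 0 else 0)"
    for i j unfolding unit_vec_def by simp
  have "(\<Sum>i\<in>{1..n}. \<Sum>j\<in>{1..n}. unit_vec a i * unit_vec b j * c i j k)
      = (\<Sum>i\<in>{1..n}. if i = a then (\<Sum>j\<in>{1..n}. if j = b then c a b k else 0) else 0)"
    unfolding entry by (intro sum.cong refl) simp
  also have "\<dots> = c a b k" using assms by (simp add: sum.delta')
  finally show "sc_bracket n c (unit_vec a) (unit_vec b) k = (if 1 \<le> k \<and> k \<le> n then c a b k else 0)"
    unfolding sc_bracket_def by simp
qed

lemma thm_spec_eq_0_other: "a \<noteq> 1 \<Longrightarrow> a \<noteq> n - 2 \<Longrightarrow> a \<noteq> n - 1 \<Longrightarrow> thm_spec n \<alpha> \<gamma> \<beta> a b k = 0"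
  unfolding thm_spec_def by simp

locale dim_ge_6 =
  fixes n :: nat
  assumes six_le_n: "6 \<le> n"
begin

lemma index_succ: "n - 2 + 1 = n - 1" "n - 1 + 1 = n"
  using six_le_n by auto

lemma thm_spec_1: "thm_spec n \<alpha> \<gamma> \<beta> 1 b k = (if 3 \<le> b \<and> k = b - 1 then 1 else 0)"
  using six_le_n unfolding thm_spec_def by auto

lemma thm_spec_n2_n1: "thm_spec n \<alpha> \<gamma> \<beta> (n - 2) (n - 1) k = (if k = 2 then \<alpha> else 0)"
  using six_le_n unfolding thm_spec_def by auto

lemma thm_spec_n2_n: "thm_spec n \<alpha> \<gamma> \<beta> (n - 2) n k = (if k = 3 then \<alpha> else if k = 2 then \<gamma> else 0)"
  using six_le_n unfolding thm_spec_def by auto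

lemma thm_spec_n1_n:
  "thm_spec n \<alpha> \<gamma> \<beta> (n - 1) n k = (if k = 4 then \<alpha> else if k = 3 then \<gamma> else if k = 2 then \<beta> else 0)"
  using six_le_n unfolding thm_spec_def by auto

lemma thm_spec_eq_0_if_ge: "b \<le> a \<Longrightarrow> thm_spec n \<alpha> \<gamma> \<beta> a b k = 0"
  using six_le_n unfolding thm_spec_def by auto

lemma antisym_sc_thm_spec:
  "antisym_sc (thm_spec n \<alpha> \<gamma> \<beta>) i j k = thm_spec n \<alpha> \<gamma> \<beta> i j k - thm_spec n \<alpha> \<gamma> \<beta> j i k"
  unfolding antisym_sc_def using thm_spec_eq_0_if_ge by auto

end

section \<open>Adapted bases\<close>

lemma sum_shift_down:
  fixes n :: nat
  shows "(\<Sum>k\<in>{1..n}. c k * (if 3 \<le> k then f (k - 1) else 0))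
   = (\<Sum>k\<in>{1..n}. (if k + 1 \<le> n \<and> 2 \<le> k then c (k + 1) else 0) * (f k :: complex))"
proof -
  have "(\<Sum>k\<in>{1..n}. c k * (if 3 \<le> k then f (k - 1) else 0)) = (\<Sum>k\<in>{3..n}. c k * f (k - 1))"
    by (simp add: if_distrib[where f = "\<lambda>x. _ * x"] sum.inter_filter[symmetric] cong: if_cong)
       (intro sum.cong; auto)
  also have "\<dots> = (\<Sum>k\<in>{2..n - 1}. c (k + 1) * f k)"
    by (rule sum.reindex_bij_witness[of _ "\<lambda>k. k + 1" "\<lambda>k. k - 1"]) auto
  also have "\<dots> = (\<Sum>k\<in>{1..n}. (if k + 1 \<le> n \<and> 2 \<le> k then c (k + 1) else 0) * f k)"
    by (simp add: if_distrib[where f = "\<lambda>x. x * _"] sum.inter_filter[symmetric] cong: if_cong)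
       (intro sum.cong; auto)
  finally show ?thesis .
qed

locale adapted_lie =
  fixes n :: nat and B :: "cvec \<Rightarrow> cvec \<Rightarrow> cvec" and e :: "nat \<Rightarrow> cvec"
  assumes lie: "lie_alg n B" and adapted: "adapted_basis n B e" and three_le_n: "3 \<le> n"
begin

lemma basis_in_vsp: "1 \<le> i \<Longrightarrow> i \<le> n \<Longrightarrow> e i \<in> vsp n"
  using adapted unfolding adapted_basis_def by simp

lemma bracket_e1: "3 \<le> h \<Longrightarrow> h \<le> n \<Longrightarrow> B (e 1) (e h) = e (h - 1)"
  using adapted unfolding adapted_basis_def by simp

lemma bracket_e2: "1 \<le> h \<Longrightarrow> h \<le> n \<Longrightarrow> B (e 2) (e h) = vzero"
  using adapted unfolding adapted_basis_def by simp

lemma bracket_e3: "2 \<le> h \<Longrightarrow> h \<le> n \<Longrightarrow> B (e 3) (e h) = vzero"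
  using adapted unfolding adapted_basis_def by simp

lemma basis_inj: "inj_on e {1..n}"
  and basis_indep: "cindep (e ` {1..n})"
  and basis_span: "cspan (e ` {1..n}) = vsp n"
  using adapted unfolding adapted_basis_def by simp_all

lemma coords_exist: "v \<in> vsp n \<Longrightarrow> \<exists>c. v = lcomb c e {1..n}"
  using basis_coords_exist[OF basis_inj basis_span] .

lemma coords_unique: "lcomb c e {1..n} = lcomb d e {1..n} \<Longrightarrow> k \<in> {1..n} \<Longrightarrow> c k = d k"
  using basis_coords_unique[OF basis_inj basis_indep] .

lemma coord_eq_0: "lcomb c e {1..n} = vzero \<Longrightarrow> k \<in> {1..n} \<Longrightarrow> c k = 0"
  using basis_coord_eq_0[OF basis_inj basis_indep] .

lemma bracket_in_vsp: "1 \<le> a \<Longrightarrow> a \<le> n \<Longrightarrow> 1 \<le> b \<Longrightarrow> b \<le> n \<Longrightarrow> B (e a) (e b) \<in> vsp n"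
  using lie_bracket_in_vsp[OF lie] basis_in_vsp by simp

lemma bracket_swap: "1 \<le> a \<Longrightarrow> a \<le> n \<Longrightarrow> 1 \<le> b \<Longrightarrow> b \<le> n \<Longrightarrow> B (e b) (e a) i = - B (e a) (e b) i"
  by (rule lie_antisym[OF lie]) (simp_all add: basis_in_vsp)

lemma bracket_e1_e2: "B (e 1) (e 2) = vzero"
  using bracket_swap[of 2 1] bracket_e2[of 1] three_le_n by (auto simp: vzero_def)

lemma bracket_e_e1: "3 \<le> j \<Longrightarrow> j \<le> n \<Longrightarrow> B (e j) (e 1) = smul (-1) (e (j - 1))"
  using bracket_swap[of 1 j] bracket_e1[of j] by (auto simp: smul_def)

lemma bracket_e_e3: "2 \<le> h \<Longrightarrow> h \<le> n \<Longrightarrow> B (e h) (e 3) = vzero"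
  using bracket_swap[of 3 h] bracket_e3[of h] three_le_n by (auto simp: vzero_def)

lemma ad_e1_leibniz:
  assumes k: "3 \<le> k" "k \<le> n" and j: "3 \<le> j" "j \<le> n"
  shows "B (e 1) (B (e k) (e j)) = vadd (B (e (k - 1)) (e j)) (B (e k) (e (j - 1)))"
proof
  fix i
  have jac: "B (e 1) (B (e k) (e j)) i + (B (e k) (B (e j) (e 1)) i + B (e j) (B (e 1) (e k)) i) = 0"
    using lie_jacobi[OF lie] basis_in_vsp k j by simp
  have "B (e k) (B (e j) (e 1)) i = - B (e k) (e (j - 1)) i"
    using bracket_e_e1[OF j] lie_smul_right[OF lie, of "e k" "e (j - 1)" "-1"] basis_in_vsp k j
    by (simp add: smul_def)
  moreover have "B (e j) (B (e 1) (e k)) i = - B (e (k - 1)) (e j) i"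
    using bracket_e1[OF k] bracket_swap[of "k - 1" j] k j by simp
  ultimately show "B (e 1) (B (e k) (e j)) i = vadd (B (e (k - 1)) (e j)) (B (e k) (e (j - 1))) i"
    using jac unfolding vadd_def by (simp add: algebra_simps)
qed

lemma ad_e1_lcomb:
  "B (e 1) (lcomb c e {1..n}) = lcomb (\<lambda>k. if k + 1 \<le> n \<and> 2 \<le> k then c (k + 1) else 0) e {1..n}"
proof -
  have "B (e 1) (e k) = (\<lambda>j. if 3 \<le> k then e (k - 1) j else 0)" if k: "k \<in> {1..n}" for k
  proof -
    consider "k = 1" | "k = 2" | "3 \<le> k" using k by fastforce
    then show ?thesis
      using lie_alternating[OF lie] basis_in_vsp bracket_e1_e2 bracket_e1 k
      by cases (auto simp: vzero_def)
  qed
  note shift = this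
  have "B (e 1) (lcomb c e {1..n}) = lcomb c (\<lambda>k. B (e 1) (e k)) {1..n}"
    by (rule lie_lcomb_right[OF lie]) (use basis_in_vsp three_le_n in auto)
  also have "\<dots> = lcomb c (\<lambda>k j. if 3 \<le> k then e (k - 1) j else 0) {1..n}"
    unfolding lcomb_def by (intro ext sum.cong refl) (subst shift; simp)
  also have "\<dots> = lcomb (\<lambda>k. if k + 1 \<le> n \<and> 2 \<le> k then c (k + 1) else 0) e {1..n}"
    unfolding lcomb_def by (rule ext, rule sum_shift_down)
  finally show ?thesis .
qed

lemma ad_e3_lcomb: "B (e 3) (lcomb c e {1..n}) = lcomb (\<lambda>k. if k = 2 then - c 1 else 0) e {1..n}"
proof -
  have "B (e 3) (lcomb c e {1..n}) = lcomb c (\<lambda>k. B (e 3) (e k)) {1..n}"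
    by (rule lie_lcomb_right[OF lie]) (use basis_in_vsp three_le_n in auto)
  also have "\<dots> = lcomb (\<lambda>k. if k = 1 then - c 1 else 0) (\<lambda>k. e 2) {1..n}"
    unfolding lcomb_def
  proof (intro ext sum.cong refl)
    fix j k assume "k \<in> {1..n}"
    then show "c k * B (e 3) (e k) j = (if k = 1 then - c 1 else 0) * e 2 j"
      using bracket_e_e1[of 3] bracket_e3[of k] three_le_n by (auto simp: smul_def vzero_def)
  qed
  also have "\<dots> = lcomb (\<lambda>k. if k = 2 then - c 1 else 0) e {1..n}"
    using three_le_n unfolding lcomb_def
    by (simp add: if_distrib[where f = "\<lambda>x. x * _"] sum.delta cong: if_cong)
  finally show ?thesis .
qed

lemma ad_e3_bracket:
  assumes "2 \<le> a" "a \<le> n" "2 \<le> b" "b \<le> n"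
  shows "B (e 3) (B (e a) (e b)) = vzero"
proof
  fix i
  have "B (e 3) (B (e a) (e b)) i + (B (e a) (B (e b) (e 3)) i + B (e b) (B (e 3) (e a)) i) = 0"
    using lie_jacobi[OF lie] basis_in_vsp assms three_le_n by simp
  then show "B (e 3) (B (e a) (e b)) i = vzero i"
    using bracket_e_e3 bracket_e3 lie_zero_right[OF lie] basis_in_vsp assms by (simp add: vzero_def)
qed

lemma bracket_coords_shift:
  assumes ab: "2 \<le> a" "a \<le> n" "2 \<le> b" "b \<le> n"
    and c: "B (e a) (e b) = lcomb c e {1..n}" and d: "B (e 1) (B (e a) (e b)) = lcomb d e {1..n}"
  shows "c 1 = 0" and "3 \<le> k \<Longrightarrow> k \<le> n \<Longrightarrow> c k = d (k - 1)"
proof -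
  have "lcomb (\<lambda>k. if k = 2 then - c 1 else 0) e {1..n} = vzero"
    using ad_e3_bracket[OF ab] unfolding c ad_e3_lcomb .
  then show "c 1 = 0" using coord_eq_0[of _ 2] three_le_n by fastforce
next
  assume k: "3 \<le> k" "k \<le> n"
  have "lcomb (\<lambda>k. if k + 1 \<le> n \<and> 2 \<le> k then c (k + 1) else 0) e {1..n} = lcomb d e {1..n}"
    using d unfolding c ad_e1_lcomb .
  note shifted = coords_unique[OF this, of "k - 1"]
  have "k - 1 \<in> {1..n}" "k - 1 + 1 = k" "2 \<le> k - 1" using k by auto
  with shifted k show "c k = d (k - 1)" by simp
qed

end

section \<open>Algebras with triple (n-2, n-2, n): the normal form\<close>

locale triple_n2 = adapted_lie n B e + dim_ge_6 n for n B e +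
  assumes z1: "is_z1 n B e (n - 2)" and z2: "is_z2 n B e (n - 2)"
begin

lemma bracket_eq_vzero_below:
  assumes "j \<le> n" "2 \<le> k" "k \<le> n - 3" "k < j"
  shows "B (e k) (e j) = vzero"
  using assms
proof (induction j arbitrary: k rule: inc_induct)
  case base
  consider "k = 2" | "k = 3" | "4 \<le> k" using base.prems by linarith
  then show ?case
    using bracket_e2[of n] bracket_e3[of n] z1 base.prems six_le_n
    by cases (auto simp: is_z1_def)
next
  case (step j)
  show ?case
  proof (cases "k = 2")
    case True
    then show ?thesis using bracket_e2 step by simp
  next
    case False
    then have k: "3 \<le> k" "k \<le> n" using step.prems six_le_n by auto
    have "B (e 1) (B (e k) (e (Suc j))) = vadd (B (e (k - 1)) (e (Suc j))) (B (e k) (e j))"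
      using ad_e1_leibniz[OF k, of "Suc j"] step.hyps step.prems by simp
    moreover have "B (e k) (e (Suc j)) = vzero" and "B (e (k - 1)) (e (Suc j)) = vzero"
      using step.IH step.prems k by auto
    ultimately show ?thesis
      using lie_zero_right[OF lie] basis_in_vsp six_le_n by simp
  qed
qed

lemma ad_e1_top_brackets:
  "B (e 1) (B (e (n - 2)) (e (n - 1))) = vzero"
  "B (e 1) (B (e (n - 2)) (e n)) = B (e (n - 2)) (e (n - 1))"
  "B (e 1) (B (e (n - 1)) (e n)) = B (e (n - 2)) (e n)"
proof -
  have idx: "3 \<le> n - 2" "n - 2 - 1 = n - 3" "n - 1 - 1 = n - 2" "n - 3 \<le> n - 3" "n - 3 < n - 1"
    using six_le_n by auto
  show "B (e 1) (B (e (n - 2)) (e (n - 1))) = vzero"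
    using ad_e1_leibniz[of "n - 2" "n - 1"] bracket_eq_vzero_below[of "n - 1" "n - 3"]
      lie_alternating[OF lie] basis_in_vsp idx six_le_n by simp
  show "B (e 1) (B (e (n - 2)) (e n)) = B (e (n - 2)) (e (n - 1))"
    using ad_e1_leibniz[of "n - 2" n] bracket_eq_vzero_below[of n "n - 3"] idx six_le_n by simp
  show "B (e 1) (B (e (n - 1)) (e n)) = B (e (n - 2)) (e n)"
    using ad_e1_leibniz[of "n - 1" n] lie_alternating[OF lie] basis_in_vsp idx six_le_n by simp
qed

lemma top_brackets:
  obtains \<alpha> \<gamma> \<beta> where "\<alpha> \<noteq> 0"
    and "B (e (n - 2)) (e (n - 1)) = lcomb (thm_spec n \<alpha> \<gamma> \<beta> (n - 2) (n - 1)) e {1..n}"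
    and "B (e (n - 2)) (e n) = lcomb (thm_spec n \<alpha> \<gamma> \<beta> (n - 2) n) e {1..n}"
    and "B (e (n - 1)) (e n) = lcomb (thm_spec n \<alpha> \<gamma> \<beta> (n - 1) n) e {1..n}"
proof -
  have range: "2 \<le> n - 2" "n - 2 \<le> n" "2 \<le> n - 1" "n - 1 \<le> n" "2 \<le> n" "n \<le> n"
    using six_le_n by auto
  have "B (e a) (e b) \<in> vsp n" if "a \<in> {n - 2, n - 1}" "b \<in> {n - 1, n}" for a b
    using that six_le_n by (intro bracket_in_vsp) auto
  then obtain cX cY cZ where X: "B (e (n - 2)) (e (n - 1)) = lcomb cX e {1..n}"
    and Y: "B (e (n - 2)) (e n) = lcomb cY e {1..n}" and Z: "B (e (n - 1)) (e n) = lcomb cZ e {1..n}"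
    using coords_exist by (metis insertCI)
  have "B (e 1) (B (e (n - 2)) (e (n - 1))) = lcomb (\<lambda>_. 0) e {1..n}"
    using ad_e1_top_brackets(1) by (simp add: lcomb_eq_vzero)
  note shiftX = bracket_coords_shift[OF range(1-4) X this]
    and shiftY = bracket_coords_shift[OF range(1,2,5,6) Y ad_e1_top_brackets(2)[unfolded X]]
    and shiftZ = bracket_coords_shift[OF range(3-6) Z ad_e1_top_brackets(3)[unfolded Y]]
  define \<alpha> \<gamma> \<beta> where "\<alpha> = cX 2" and "\<gamma> = cY 2" and "\<beta> = cZ 2"
  have low_cases: "k = 1 \<or> k = 2 \<or> 3 \<le> k \<and> k - 1 \<in> {1..n}" if "k \<in> {1..n}" for k
    using that by auto
  have cX: "cX k = (if k = 2 then \<alpha> else 0)" if "k \<in> {1..n}" for k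
    using low_cases[OF that] that shiftX unfolding \<alpha>_def by auto
  have cY: "cY k = (if k = 3 then \<alpha> else if k = 2 then \<gamma> else 0)" if "k \<in> {1..n}" for k
    using low_cases[OF that] that shiftY cX[of "k - 1"] unfolding \<gamma>_def by auto
  have cZ: "cZ k = (if k = 4 then \<alpha> else if k = 3 then \<gamma> else if k = 2 then \<beta> else 0)"
    if "k \<in> {1..n}" for k
    using low_cases[OF that] that shiftZ cY[of "k - 1"] unfolding \<beta>_def by auto
  have "\<alpha> \<noteq> 0"
  proof
    assume "\<alpha> = 0"
    then have "lcomb cX e {1..n} = vzero" using cX by (intro lcomb_eq_vzero) simp
    then have "B (e (n - 2)) (e (n - 2 + 1)) = vzero" unfolding index_succ using X by simp
    then show False using z2 unfolding is_z2_def by blast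
  qed
  moreover have "lcomb cX e {1..n} = lcomb (thm_spec n \<alpha> \<gamma> \<beta> (n - 2) (n - 1)) e {1..n}"
    by (rule lcomb_cong) (unfold thm_spec_n2_n1, rule cX)
  moreover have "lcomb cY e {1..n} = lcomb (thm_spec n \<alpha> \<gamma> \<beta> (n - 2) n) e {1..n}"
    by (rule lcomb_cong) (unfold thm_spec_n2_n, rule cY)
  moreover have "lcomb cZ e {1..n} = lcomb (thm_spec n \<alpha> \<gamma> \<beta> (n - 1) n) e {1..n}"
    by (rule lcomb_cong) (unfold thm_spec_n1_n, rule cZ)
  ultimately show thesis using that X Y Z by simp
qed

lemma bracket_e1_normal_form:
  assumes "1 < b" "b \<le> n"
  shows "B (e 1) (e b) = lcomb (thm_spec n \<alpha> \<gamma> \<beta> 1 b) e {1..n}"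
proof (cases "b = 2")
  case True
  have "lcomb (thm_spec n \<alpha> \<gamma> \<beta> 1 2) e {1..n} = vzero"
    by (rule lcomb_eq_vzero) (unfold thm_spec_1, simp)
  then show ?thesis using True bracket_e1_e2 by simp
next
  case False
  then have b: "3 \<le> b" using assms by simp
  have "lcomb (thm_spec n \<alpha> \<gamma> \<beta> 1 b) e {1..n} = lcomb (\<lambda>k. if k = b - 1 then 1 else 0) e {1..n}"
    by (rule lcomb_cong) (unfold thm_spec_1, use b in simp)
  also have "\<dots> = e (b - 1)" using b assms by (intro lcomb_delta) auto
  finally show ?thesis using b assms bracket_e1 by simp
qed

lemma normal_form:
  "\<exists>\<alpha> \<gamma> \<beta>. \<alpha> \<noteq> 0 \<and> (\<forall>a b. 1 \<le> a \<and> a < b \<and> b \<le> n \<longrightarrow>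
      B (e a) (e b) = lcomb (thm_spec n \<alpha> \<gamma> \<beta> a b) e {1..n})"
proof -
  obtain \<alpha> \<gamma> \<beta> where "\<alpha> \<noteq> 0"
    and X: "B (e (n - 2)) (e (n - 1)) = lcomb (thm_spec n \<alpha> \<gamma> \<beta> (n - 2) (n - 1)) e {1..n}"
    and Y: "B (e (n - 2)) (e n) = lcomb (thm_spec n \<alpha> \<gamma> \<beta> (n - 2) n) e {1..n}"
    and Z: "B (e (n - 1)) (e n) = lcomb (thm_spec n \<alpha> \<gamma> \<beta> (n - 1) n) e {1..n}"
    by (rule top_brackets)
  have "B (e a) (e b) = lcomb (thm_spec n \<alpha> \<gamma> \<beta> a b) e {1..n}" if ab: "1 \<le> a" "a < b" "b \<le> n" for a b
  proof -
    consider "a = 1" | "2 \<le> a" "a \<le> n - 3" | "a = n - 2" "b = n - 1" | "a = n - 2" "b = n"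
      | "a = n - 1" "b = n"
      using ab by linarith
    then show ?thesis
    proof cases
      case 2
      have "lcomb (thm_spec n \<alpha> \<gamma> \<beta> a b) e {1..n} = vzero"
        using 2 six_le_n by (intro lcomb_eq_vzero thm_spec_eq_0_other) auto
      then show ?thesis using 2 ab bracket_eq_vzero_below by simp
    qed (use X Y Z ab bracket_e1_normal_form in simp_all)
  qed
  then show ?thesis using \<open>\<alpha> \<noteq> 0\<close> by blast
qed

end

abbreviation nf_bracket :: "nat \<Rightarrow> complex \<Rightarrow> complex \<Rightarrow> complex \<Rightarrow> cvec \<Rightarrow> cvec \<Rightarrow> cvec" where
  "nf_bracket n \<alpha> \<gamma> \<beta> \<equiv> sc_bracket n (antisym_sc (thm_spec n \<alpha> \<gamma> \<beta>))"

definition coeff_n2_n1 :: "complex \<Rightarrow> nat \<Rightarrow> complex" where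
  "coeff_n2_n1 \<alpha> k = (if k = 2 then \<alpha> else 0)"

definition coeff_n2_n :: "complex \<Rightarrow> complex \<Rightarrow> nat \<Rightarrow> complex" where
  "coeff_n2_n \<alpha> \<gamma> k = (if k = 2 then \<gamma> else if k = 3 then \<alpha> else 0)"

definition coeff_n1_n :: "complex \<Rightarrow> complex \<Rightarrow> complex \<Rightarrow> nat \<Rightarrow> complex" where
  "coeff_n1_n \<alpha> \<gamma> \<beta> k = (if k = 2 then \<beta> else if k = 3 then \<gamma> else if k = 4 then \<alpha> else 0)"

definition nf_bracket_formula :: "nat \<Rightarrow> complex \<Rightarrow> complex \<Rightarrow> complex \<Rightarrow> cvec \<Rightarrow> cvec \<Rightarrow> cvec" where
  "nf_bracket_formula n \<alpha> \<gamma> \<beta> x y k = (if 1 \<le> k \<and> k \<le> n then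
     (if 2 \<le> k \<and> k + 1 \<le> n then x 1 * y (k + 1) - y 1 * x (k + 1) else 0)
     + coeff_n2_n1 \<alpha> k * (x (n - 2) * y (n - 1) - y (n - 2) * x (n - 1))
     + coeff_n2_n \<alpha> \<gamma> k * (x (n - 2) * y n - y (n - 2) * x n)
     + coeff_n1_n \<alpha> \<gamma> \<beta> k * (x (n - 1) * y n - y (n - 1) * x n) else 0)"

definition pair_indicator :: "nat \<Rightarrow> nat \<Rightarrow> nat \<Rightarrow> nat \<Rightarrow> complex" where
  "pair_indicator a b i j = (if i = a \<and> j = b then 1 else 0)"

lemma double_sum_pair_indicator:
  "(\<Sum>i\<in>{1..n}. \<Sum>j\<in>{1..n}. x i * y j * pair_indicator a b i j) =
     (if a \<in> {1..n} \<and> b \<in> {1..n} then x a * y b else 0)"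
proof -
  have "(\<Sum>j\<in>{1..n}. x i * y j * pair_indicator a b i j) = (if i = a then if b \<in> {1..n} then x i * y b else 0 else 0)"
    for i by (cases "i = a") (simp_all add: pair_indicator_def if_distrib[where f = "\<lambda>c. _ * c"] sum.delta' cong: if_cong)
  then show ?thesis by (simp add: sum.delta')
qed

lemma nf_bracket_formula_1: "nf_bracket_formula n \<alpha> \<gamma> \<beta> x y 1 = 0"
  unfolding nf_bracket_formula_def coeff_n2_n1_def coeff_n2_n_def coeff_n1_n_def by simp

lemma nf_bracket_formula_0_0_0_eq_vzero:
  assumes "x 1 = 0" "y 1 = 0"
  shows "nf_bracket_formula n 0 0 0 x y = vzero"
  using assms unfolding nf_bracket_formula_def coeff_n2_n1_def coeff_n2_n_def coeff_n1_n_def vzero_def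
  by (simp add: fun_eq_iff)

context dim_ge_6
begin

lemma thm_spec_decomp:
  "thm_spec n \<alpha> \<gamma> \<beta> i j k = (if 2 \<le> k then pair_indicator 1 (k + 1) i j else 0)
    + coeff_n2_n1 \<alpha> k * pair_indicator (n - 2) (n - 1) i j
    + coeff_n2_n \<alpha> \<gamma> k * pair_indicator (n - 2) n i j
    + coeff_n1_n \<alpha> \<gamma> \<beta> k * pair_indicator (n - 1) n i j"
  using six_le_n
  unfolding thm_spec_def pair_indicator_def coeff_n2_n1_def coeff_n2_n_def coeff_n1_n_def
  by (cases "i = 1"; cases "i = n - 2"; cases "i = n - 1") auto

lemma thm_spec_double_sum:
  "(\<Sum>i\<in>{1..n}. \<Sum>j\<in>{1..n}. x i * y j * thm_spec n \<alpha> \<gamma> \<beta> i j k) =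
    (if 2 \<le> k \<and> k + 1 \<le> n then x 1 * y (k + 1) else 0)
    + coeff_n2_n1 \<alpha> k * (x (n - 2) * y (n - 1)) + coeff_n2_n \<alpha> \<gamma> k * (x (n - 2) * y n)
    + coeff_n1_n \<alpha> \<gamma> \<beta> k * (x (n - 1) * y n)"
proof -
  let ?T = "\<lambda>i j. if 2 \<le> k then pair_indicator 1 (k + 1) i j else 0"
  have split: "x i * y j * thm_spec n \<alpha> \<gamma> \<beta> i j k =
     x i * y j * ?T i j + coeff_n2_n1 \<alpha> k * (x i * y j * pair_indicator (n - 2) (n - 1) i j)
     + coeff_n2_n \<alpha> \<gamma> k * (x i * y j * pair_indicator (n - 2) n i j)
     + coeff_n1_n \<alpha> \<gamma> \<beta> k * (x i * y j * pair_indicator (n - 1) n i j)" for i j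
    unfolding thm_spec_decomp by (simp add: algebra_simps)
  have "(\<Sum>i\<in>{1..n}. \<Sum>j\<in>{1..n}. x i * y j * ?T i j) = (if 2 \<le> k \<and> k + 1 \<le> n then x 1 * y (k + 1) else 0)"
    using double_sum_pair_indicator[where n = n and x = x and y = y and a = 1 and b = "k + 1"] six_le_n by (cases "2 \<le> k") simp_all
  moreover have "n - 2 \<in> {1..n}" "n - 1 \<in> {1..n}" "n \<in> {1..n}" using six_le_n by auto
  ultimately show ?thesis
    unfolding split sum.distrib sum_distrib_left[symmetric] double_sum_pair_indicator by simp
qed

lemma nf_bracket_eq_formula: "nf_bracket n \<alpha> \<gamma> \<beta> x y = nf_bracket_formula n \<alpha> \<gamma> \<beta> x y"
proof
  fix k
  have swap: "(\<Sum>i\<in>{1..n}. \<Sum>j\<in>{1..n}. x i * y j * thm_spec n \<alpha> \<gamma> \<beta> j i k)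
     = (\<Sum>i\<in>{1..n}. \<Sum>j\<in>{1..n}. y i * x j * thm_spec n \<alpha> \<gamma> \<beta> i j k)"
    by (subst sum.swap) (simp add: mult.commute)
  have "(\<Sum>i\<in>{1..n}. \<Sum>j\<in>{1..n}. x i * y j * antisym_sc (thm_spec n \<alpha> \<gamma> \<beta>) i j k)
     = (\<Sum>i\<in>{1..n}. \<Sum>j\<in>{1..n}. x i * y j * thm_spec n \<alpha> \<gamma> \<beta> i j k)
     - (\<Sum>i\<in>{1..n}. \<Sum>j\<in>{1..n}. x i * y j * thm_spec n \<alpha> \<gamma> \<beta> j i k)"
    unfolding antisym_sc_thm_spec by (simp add: algebra_simps sum_subtractf)
  also have "\<dots> = ((if 2 \<le> k \<and> k + 1 \<le> n then x 1 * y (k + 1) else 0)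
      + coeff_n2_n1 \<alpha> k * (x (n - 2) * y (n - 1)) + coeff_n2_n \<alpha> \<gamma> k * (x (n - 2) * y n)
      + coeff_n1_n \<alpha> \<gamma> \<beta> k * (x (n - 1) * y n))
    - ((if 2 \<le> k \<and> k + 1 \<le> n then y 1 * x (k + 1) else 0)
      + coeff_n2_n1 \<alpha> k * (y (n - 2) * x (n - 1)) + coeff_n2_n \<alpha> \<gamma> k * (y (n - 2) * x n)
      + coeff_n1_n \<alpha> \<gamma> \<beta> k * (y (n - 1) * x n))"
    unfolding swap thm_spec_double_sum ..
  finally have sum_eq: "(\<Sum>i\<in>{1..n}. \<Sum>j\<in>{1..n}. x i * y j * antisym_sc (thm_spec n \<alpha> \<gamma> \<beta>) i j k) = \<dots>" .
  show "nf_bracket n \<alpha> \<gamma> \<beta> x y k = nf_bracket_formula n \<alpha> \<gamma> \<beta> x y k"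
    unfolding sc_bracket_def sum_eq nf_bracket_formula_def by (simp add: algebra_simps)
qed

lemma nf_bracket_formula_n: "nf_bracket_formula n \<alpha> \<gamma> \<beta> x y n = 0"
  using six_le_n unfolding nf_bracket_formula_def coeff_n2_n1_def coeff_n2_n_def coeff_n1_n_def by auto

lemma nf_bracket_formula_n1: "nf_bracket_formula n \<alpha> \<gamma> \<beta> x y (n - 1) = x 1 * y n - y 1 * x n"
  using six_le_n unfolding nf_bracket_formula_def coeff_n2_n1_def coeff_n2_n_def coeff_n1_n_def by auto

lemma nf_bracket_formula_n2:
  "nf_bracket_formula n \<alpha> \<gamma> \<beta> x y (n - 2) = x 1 * y (n - 1) - y 1 * x (n - 1)
     + coeff_n1_n \<alpha> \<gamma> \<beta> (n - 2) * (x (n - 1) * y n - y (n - 1) * x n)"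
proof -
  have "n - 2 + 1 = n - 1" using six_le_n by simp
  then show ?thesis
    using six_le_n unfolding nf_bracket_formula_def coeff_n2_n1_def coeff_n2_n_def by auto
qed

lemma nf_bracket_formula_2:
  "nf_bracket_formula n \<alpha> \<gamma> \<beta> x y 2 = x 1 * y 3 - y 1 * x 3
     + \<alpha> * (x (n - 2) * y (n - 1) - y (n - 2) * x (n - 1))
     + \<gamma> * (x (n - 2) * y n - y (n - 2) * x n) + \<beta> * (x (n - 1) * y n - y (n - 1) * x n)"
  using six_le_n by (simp add: nf_bracket_formula_def coeff_n2_n1_def coeff_n2_n_def coeff_n1_n_def)

lemma nf_bracket_formula_3:
  "nf_bracket_formula n \<alpha> \<gamma> \<beta> x y 3 = x 1 * y 4 - y 1 * x 4
     + \<alpha> * (x (n - 2) * y n - y (n - 2) * x n) + \<gamma> * (x (n - 1) * y n - y (n - 1) * x n)"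
  using six_le_n by (simp add: nf_bracket_formula_def coeff_n2_n1_def coeff_n2_n_def coeff_n1_n_def)

lemma nf_bracket_formula_4:
  "nf_bracket_formula n \<alpha> \<gamma> \<beta> x y 4 = x 1 * y 5 - y 1 * x 5 + \<alpha> * (x (n - 1) * y n - y (n - 1) * x n)"
  using six_le_n by (simp add: nf_bracket_formula_def coeff_n2_n1_def coeff_n2_n_def coeff_n1_n_def)

lemma nf_bracket_formula_ge_5:
  "5 \<le> k \<Longrightarrow> nf_bracket_formula n \<alpha> \<gamma> \<beta> x y k = (if k + 1 \<le> n then x 1 * y (k + 1) - y 1 * x (k + 1) else 0)"
  by (simp add: nf_bracket_formula_def coeff_n2_n1_def coeff_n2_n_def coeff_n1_n_def)
lemma nf_bracket_formula_5: "nf_bracket_formula n \<alpha> \<gamma> \<beta> x y 5 = x 1 * y 6 - y 1 * x 6"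
  using nf_bracket_formula_ge_5[of 5] six_le_n by simp

lemma nf_bracket_formula_jacobi:
  "nf_bracket_formula n \<alpha> \<gamma> \<beta> x (nf_bracket_formula n \<alpha> \<gamma> \<beta> y z) k
   + (nf_bracket_formula n \<alpha> \<gamma> \<beta> y (nf_bracket_formula n \<alpha> \<gamma> \<beta> z x) k
   + nf_bracket_formula n \<alpha> \<gamma> \<beta> z (nf_bracket_formula n \<alpha> \<gamma> \<beta> x y) k) = 0"
proof -
  consider "k = 0 \<or> n < k" | "k = 1" | "k = 2" | "k = 3" | "k = 4" | "5 \<le> k" by linarith
  then show ?thesis
  proof cases
    case 1
    then show ?thesis unfolding nf_bracket_formula_def[of n \<alpha> \<gamma> \<beta> _ _ k] by auto
  next
    case 2
    show ?thesis unfolding 2 nf_bracket_formula_1 by simp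
  next
    case 3
    show ?thesis
      unfolding 3 nf_bracket_formula_2 nf_bracket_formula_3 nf_bracket_formula_1
        nf_bracket_formula_n nf_bracket_formula_n1 nf_bracket_formula_n2
      by algebra
  next
    case 4
    show ?thesis
      unfolding 4 nf_bracket_formula_3 nf_bracket_formula_4 nf_bracket_formula_1
        nf_bracket_formula_n nf_bracket_formula_n1 nf_bracket_formula_n2
      by algebra
  next
    case 5
    show ?thesis
      unfolding 5 nf_bracket_formula_4 nf_bracket_formula_5 nf_bracket_formula_1
        nf_bracket_formula_n nf_bracket_formula_n1
      by algebra
  next
    case 6
    show ?thesis
    proof (cases "k + 1 \<le> n")
      case True
      have Suc_k: "5 \<le> k + 1" using 6 by simp
      show ?thesis
        unfolding nf_bracket_formula_ge_5[OF 6] nf_bracket_formula_ge_5[OF Suc_k] nf_bracket_formula_1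
        using True by (cases "k + 2 \<le> n"; simp; algebra)
    next
      case False
      then show ?thesis unfolding nf_bracket_formula_ge_5[OF 6] by simp
    qed
  qed
qed

end

section \<open>The normal form has triple (n-2, n-2, n)\<close>

definition lcs_start :: "nat \<Rightarrow> nat" where
  "lcs_start m = (if m \<le> 1 then 1 else 2)"

context dim_ge_6
begin

lemma lie_alg_nf_bracket: "lie_alg n (nf_bracket n \<alpha> \<gamma> \<beta>)"
  unfolding lie_alg_def
proof (intro conjI ballI allI)
  fix x
  show "nf_bracket n \<alpha> \<gamma> \<beta> x x = vzero"
    unfolding nf_bracket_eq_formula nf_bracket_formula_def vzero_def by (rule ext) simp
  fix y z
  show "vadd (nf_bracket n \<alpha> \<gamma> \<beta> x (nf_bracket n \<alpha> \<gamma> \<beta> y z))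
          (vadd (nf_bracket n \<alpha> \<gamma> \<beta> y (nf_bracket n \<alpha> \<gamma> \<beta> z x))
                (nf_bracket n \<alpha> \<gamma> \<beta> z (nf_bracket n \<alpha> \<gamma> \<beta> x y))) = vzero"
    unfolding nf_bracket_eq_formula vadd_def vzero_def using nf_bracket_formula_jacobi by (intro ext) simp
qed (simp_all add: sc_bracket_in_vsp sc_bracket_bilinear)

lemma nf_bracket_unit_vec:
  assumes "a \<in> {1..n}" "b \<in> {1..n}"
  shows "nf_bracket n \<alpha> \<gamma> \<beta> (unit_vec a) (unit_vec b) =
    (\<lambda>k. if 1 \<le> k \<and> k \<le> n then thm_spec n \<alpha> \<gamma> \<beta> a b k - thm_spec n \<alpha> \<gamma> \<beta> b a k else 0)"
  unfolding sc_bracket_unit_vec[OF assms] antisym_sc_thm_spec ..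

lemma nf_bracket_unit_vec_eq_vzero:
  assumes "a \<in> {1..n}" "b \<in> {1..n}" "\<And>k. thm_spec n \<alpha> \<gamma> \<beta> a b k = 0" "\<And>k. thm_spec n \<alpha> \<gamma> \<beta> b a k = 0"
  shows "nf_bracket n \<alpha> \<gamma> \<beta> (unit_vec a) (unit_vec b) = vzero"
proof
  fix k
  show "nf_bracket n \<alpha> \<gamma> \<beta> (unit_vec a) (unit_vec b) k = vzero k"
    unfolding nf_bracket_unit_vec[OF assms(1,2)] vzero_def using assms(3,4)[of k] by simp
qed

lemma nf_bracket_unit_vec_low:
  assumes "2 \<le> a" "a \<le> n - 3" "2 \<le> b" "b \<le> n"
  shows "nf_bracket n \<alpha> \<gamma> \<beta> (unit_vec a) (unit_vec b) = vzero"
proof (rule nf_bracket_unit_vec_eq_vzero)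
  show "a \<in> {1..n}" "b \<in> {1..n}" using assms by auto
  fix k
  show "thm_spec n \<alpha> \<gamma> \<beta> a b k = 0" using assms by (intro thm_spec_eq_0_other) auto
  show "thm_spec n \<alpha> \<gamma> \<beta> b a k = 0"
  proof (cases "a \<le> b")
    case True
    then show ?thesis by (rule thm_spec_eq_0_if_ge)
  next
    case False
    then show ?thesis using assms by (intro thm_spec_eq_0_other) auto
  qed
qed

lemma nf_bracket_top_coords:
  "nf_bracket n \<alpha> \<gamma> \<beta> (unit_vec (n - 2)) (unit_vec (n - 1)) 2 = \<alpha>"
  "nf_bracket n \<alpha> \<gamma> \<beta> (unit_vec (n - 2)) (unit_vec n) 3 = \<alpha>"
proof -
  have mem: "n - 2 \<in> {1..n}" "n - 1 \<in> {1..n}" "n \<in> {1..n}" using six_le_n by auto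
  have "thm_spec n \<alpha> \<gamma> \<beta> (n - 1) (n - 2) 2 = 0" "thm_spec n \<alpha> \<gamma> \<beta> n (n - 2) 3 = 0"
    by (simp_all add: thm_spec_eq_0_if_ge)
  then show "nf_bracket n \<alpha> \<gamma> \<beta> (unit_vec (n - 2)) (unit_vec (n - 1)) 2 = \<alpha>"
    and "nf_bracket n \<alpha> \<gamma> \<beta> (unit_vec (n - 2)) (unit_vec n) 3 = \<alpha>"
    unfolding nf_bracket_unit_vec[OF mem(1,2)] nf_bracket_unit_vec[OF mem(1,3)] thm_spec_n2_n1 thm_spec_n2_n
    using six_le_n by simp_all
qed

lemma nf_bracket_lowering:
  assumes "2 \<le> j" "j + 1 \<le> n"
  shows "nf_bracket n \<alpha> \<gamma> \<beta> (unit_vec (j + 1)) (smul (-1) (unit_vec 1)) = unit_vec j"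
proof
  fix k
  have mem: "j + 1 \<in> {1..n}" "1 \<in> {1..n}" using assms by auto
  have "nf_bracket n \<alpha> \<gamma> \<beta> (unit_vec (j + 1)) (smul (-1) (unit_vec 1)) k
      = - nf_bracket n \<alpha> \<gamma> \<beta> (unit_vec (j + 1)) (unit_vec 1) k"
    by (subst sc_bracket_bilinear(4)) (simp add: smul_def)
  also have "\<dots> = (if 1 \<le> k \<and> k \<le> n then thm_spec n \<alpha> \<gamma> \<beta> 1 (j + 1) k else 0)"
    unfolding nf_bracket_unit_vec[OF mem] using thm_spec_eq_0_if_ge[where a = "j + 1" and b = 1] by simp
  also have "\<dots> = unit_vec j k" unfolding thm_spec_1 unit_vec_def using assms by auto
  finally show "nf_bracket n \<alpha> \<gamma> \<beta> (unit_vec (j + 1)) (smul (-1) (unit_vec 1)) k = unit_vec j k" .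
qed

lemma nf_bracket_formula_eq_0_if_supported:
  assumes "x \<in> supported_in 2 i"
  shows "nf_bracket_formula n \<alpha> \<gamma> \<beta> x y i = 0"
proof -
  have x0: "x 1 = 0" "\<And>j. i < j \<Longrightarrow> x j = 0" using assms unfolding supported_in_def by auto
  consider "i = 0 \<or> n < i" | "i = 1" | "i = 2" | "i = 3" | "i = 4" | "5 \<le> i" by linarith
  then show ?thesis
  proof cases
    case 1
    then show ?thesis unfolding nf_bracket_formula_def by auto
  next
    case 2
    then show ?thesis using nf_bracket_formula_1 by simp
  next
    case 3
    then show ?thesis using x0 six_le_n by (simp add: nf_bracket_formula_2)
  next
    case 4
    then show ?thesis using x0 six_le_n by (simp add: nf_bracket_formula_3)
  next
    case 5
    then show ?thesis using x0 six_le_n by (simp add: nf_bracket_formula_4)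
  next
    case 6
    then show ?thesis unfolding nf_bracket_formula_ge_5[OF 6] using x0 by simp
  qed
qed

lemma nf_bracket_formula_supported:
  assumes m: "1 \<le> m" "m + 1 \<le> n" and x: "x \<in> supported_in (lcs_start m) (n + 1 - m)"
  shows "nf_bracket_formula n \<alpha> \<gamma> \<beta> x y \<in> supported_in 2 (n - m)"
proof -
  have "nf_bracket_formula n \<alpha> \<gamma> \<beta> x y i = 0" if i: "\<not> (2 \<le> i \<and> i \<le> n - m)" for i
  proof (cases "i \<le> 1 \<or> n \<le> i")
    case True
    then consider "i = 0 \<or> n < i" | "i = 1" | "i = n" by linarith
    then show ?thesis
    proof cases
      case 1
      then show ?thesis unfolding nf_bracket_formula_def by auto
    qed (use nf_bracket_formula_1 nf_bracket_formula_n in simp_all)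
  next
    case False
    then have "lcs_start m = 2" "n + 1 - m \<le> i" using i m unfolding lcs_start_def by auto
    then have "x \<in> supported_in 2 i" using x unfolding supported_in_def by fastforce
    then show ?thesis by (rule nf_bracket_formula_eq_0_if_supported)
  qed
  then show ?thesis unfolding supported_in_def by blast
qed

lemma cspan_nf_brackets:
  assumes m: "1 \<le> m" "m + 1 \<le> n"
  shows "cspan {nf_bracket n \<alpha> \<gamma> \<beta> x y | x y. x \<in> supported_in (lcs_start m) (n + 1 - m) \<and> y \<in> vsp n}
    = supported_in 2 (n - m)" (is "cspan ?S = _")
proof
  show "cspan ?S \<subseteq> supported_in 2 (n - m)"
    using nf_bracket_formula_supported[OF m] by (intro cspan_subset_supported_in) (auto simp: nf_bracket_eq_formula)
  have "unit_vec ` {2..n - m} \<subseteq> ?S"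
  proof
    fix w assume "w \<in> unit_vec ` {2..n - m}"
    then obtain j where j: "j \<in> {2..n - m}" "w = unit_vec j" by blast
    have "nf_bracket n \<alpha> \<gamma> \<beta> (unit_vec (j + 1)) (smul (-1) (unit_vec 1)) = unit_vec j"
      using j m by (intro nf_bracket_lowering) auto
    then have "w = nf_bracket n \<alpha> \<gamma> \<beta> (unit_vec (j + 1)) (smul (-1) (unit_vec 1))"
      using j by simp
    moreover have "unit_vec (j + 1) \<in> supported_in (lcs_start m) (n + 1 - m)"
      using j m unfolding lcs_start_def by (intro unit_vec_in_supported_in) auto
    moreover have "smul (-1) (unit_vec 1) \<in> vsp n"
      using six_le_n by (intro smul_in_vsp unit_vec_in_vsp) auto
    ultimately show "w \<in> ?S" by blast
  qed
  then show "supported_in 2 (n - m) \<subseteq> cspan ?S" by (rule supported_in_subset_cspan)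
qed

lemma lcs_nf_bracket:
  "1 \<le> m \<Longrightarrow> m \<le> n \<Longrightarrow> lcs n (nf_bracket n \<alpha> \<gamma> \<beta>) m = supported_in (lcs_start m) (n + 1 - m)"
proof (induction m rule: nat_induct_at_least)
  case base
  then show ?case by (simp add: lcs_start_def vsp_eq_supported_in)
next
  case (Suc m)
  then obtain m' where m': "m = Suc m'" by (cases m) auto
  have "lcs n (nf_bracket n \<alpha> \<gamma> \<beta>) (Suc m)
      = cspan {nf_bracket n \<alpha> \<gamma> \<beta> x y | x y. x \<in> supported_in (lcs_start m) (n + 1 - m) \<and> y \<in> vsp n}"
    using Suc by (simp add: m')
  also have "\<dots> = supported_in 2 (n - m)" using Suc by (intro cspan_nf_brackets) auto
  finally show ?case using Suc by (simp add: lcs_start_def)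
qed

lemma filiform_nf_bracket: "filiform n (nf_bracket n \<alpha> \<gamma> \<beta>)"
  unfolding filiform_def
proof (intro conjI allI impI)
  show "2 \<le> n" using six_le_n by simp
  show "lie_alg n (nf_bracket n \<alpha> \<gamma> \<beta>)" by (rule lie_alg_nf_bracket)
  fix k assume k: "2 \<le> k \<and> k \<le> n"
  then have "lcs n (nf_bracket n \<alpha> \<gamma> \<beta>) k = supported_in 2 (n + 1 - k)"
    using lcs_nf_bracket[of k] by (simp add: lcs_start_def)
  moreover have "n + 1 - k + 1 - 2 = n - k" using k by simp
  ultimately show "has_cdim (lcs n (nf_bracket n \<alpha> \<gamma> \<beta>) k) (n - k)"
    using has_cdim_supported_in[of 2 "n + 1 - k"] by simp
qed

lemma model_br_eq_formula: "model_br n = nf_bracket_formula n 0 0 0"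
proof -
  have spec: "model_spec = thm_spec n 0 0 0"
    unfolding model_spec_def thm_spec_def by (intro ext) (simp only: if_cancel)
  show ?thesis unfolding model_br_def by (intro ext) (simp only: spec nf_bracket_eq_formula)
qed

text \<open>No bracket of the model algebra has an e_1-component.\<close>

lemma model_br_brackets_commute: "model_br n (model_br n a b) (model_br n c d) = vzero"
  unfolding model_br_eq_formula by (rule nf_bracket_formula_0_0_0_eq_vzero; rule nf_bracket_formula_1)

lemma non_model_nf_bracket:
  assumes "\<alpha> \<noteq> 0"
  shows "non_model n (nf_bracket n \<alpha> \<gamma> \<beta>)"
  unfolding non_model_def
proof
  let ?L = "nf_bracket n \<alpha> \<gamma> \<beta>"
  assume "\<exists>f. lie_iso n ?L (model_br n) f"
  then obtain f where inj: "inj_on f (vsp n)"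
    and hom: "\<And>x y. x \<in> vsp n \<Longrightarrow> y \<in> vsp n \<Longrightarrow> f (?L x y) = model_br n (f x) (f y)"
    and lin: "\<And>c x. x \<in> vsp n \<Longrightarrow> f (smul c x) = smul c (f x)"
    unfolding lie_iso_def bij_betw_def by blast
  define w where "w = smul (-1) (unit_vec 1)"
  have vecs: "w \<in> vsp n" "unit_vec (n - 1) \<in> vsp n" "unit_vec n \<in> vsp n"
    unfolding w_def using six_le_n by (intro smul_in_vsp unit_vec_in_vsp; simp)+
  have "?L (unit_vec (n - 2 + 1)) w = unit_vec (n - 2)" "?L (unit_vec (n - 1 + 1)) w = unit_vec (n - 1)"
    unfolding w_def using six_le_n by (intro nf_bracket_lowering; simp)+
  then have "?L (?L (unit_vec (n - 1)) w) (?L (unit_vec n) w) 2 = \<alpha>"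
    unfolding index_succ using nf_bracket_top_coords by simp
  moreover have "f (?L (?L (unit_vec (n - 1)) w) (?L (unit_vec n) w)) = f vzero"
    using hom vecs sc_bracket_in_vsp lin[of vzero 0] model_br_brackets_commute
    by (simp add: smul_zero_left)
  then have "?L (?L (unit_vec (n - 1)) w) (?L (unit_vec n) w) = vzero"
    using inj sc_bracket_in_vsp vzero_in_vsp by (meson inj_onD)
  ultimately show False using assms by (simp add: vzero_def)
qed

lemma adapted_basis_unit_vec: "adapted_basis n (nf_bracket n \<alpha> \<gamma> \<beta>) unit_vec"
  unfolding adapted_basis_def
proof (intro conjI ballI allI impI)
  show "unit_vec i \<in> vsp n" if "i \<in> {1..n}" for i using that unit_vec_in_vsp by auto
  show "inj_on unit_vec {1..n}" by (rule inj_on_unit_vec)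
  show "cindep (unit_vec ` {1..n})" by (rule cindep_unit_vec)
  show "cspan (unit_vec ` {1..n}) = vsp n" by (simp add: cspan_unit_vec vsp_eq_supported_in)
next
  fix h assume h: "3 \<le> h \<and> h \<le> n"
  then have mem: "1 \<in> {1..n}" "h \<in> {1..n}" by auto
  show "nf_bracket n \<alpha> \<gamma> \<beta> (unit_vec 1) (unit_vec h) = unit_vec (h - 1)"
    unfolding nf_bracket_unit_vec[OF mem] thm_spec_1
    using h thm_spec_eq_0_if_ge[where a = h and b = 1] by (auto simp: fun_eq_iff unit_vec_def)
next
  fix h assume h: "1 \<le> h \<and> h \<le> n"
  show "nf_bracket n \<alpha> \<gamma> \<beta> (unit_vec 2) (unit_vec h) = vzero"
  proof (cases "h = 1")
    case True
    show ?thesis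
    proof (rule nf_bracket_unit_vec_eq_vzero)
      show "2 \<in> {1..n}" "h \<in> {1..n}" using h six_le_n by auto
      show "thm_spec n \<alpha> \<gamma> \<beta> 2 h k = 0" "thm_spec n \<alpha> \<gamma> \<beta> h 2 k = 0" for k
        unfolding True thm_spec_1 using six_le_n by (simp_all add: thm_spec_eq_0_if_ge)
    qed
  next
    case False
    then show ?thesis using h six_le_n by (intro nf_bracket_unit_vec_low) auto
  qed
next
  fix h assume "2 \<le> h \<and> h \<le> n"
  then show "nf_bracket n \<alpha> \<gamma> \<beta> (unit_vec 3) (unit_vec h) = vzero"
    using six_le_n by (intro nf_bracket_unit_vec_low) auto
qed

lemma is_z1_nf_bracket:
  assumes "\<alpha> \<noteq> 0"
  shows "is_z1 n (nf_bracket n \<alpha> \<gamma> \<beta>) unit_vec (n - 2)"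
  unfolding is_z1_def
proof (intro conjI allI impI)
  show "4 \<le> n - 2" using six_le_n by simp
  show "nf_bracket n \<alpha> \<gamma> \<beta> (unit_vec (n - 2)) (unit_vec n) \<noteq> vzero"
    using nf_bracket_top_coords(2) assms by (metis vzero_def)
  show "nf_bracket n \<alpha> \<gamma> \<beta> (unit_vec k) (unit_vec n) = vzero" if "4 \<le> k \<and> k < n - 2" for k
    using that by (intro nf_bracket_unit_vec_low) auto
qed

lemma is_z2_nf_bracket:
  assumes "\<alpha> \<noteq> 0"
  shows "is_z2 n (nf_bracket n \<alpha> \<gamma> \<beta>) unit_vec (n - 2)"
  unfolding is_z2_def index_succ
proof (intro conjI allI impI)
  show "4 \<le> n - 2" using six_le_n by simp
  show "nf_bracket n \<alpha> \<gamma> \<beta> (unit_vec (n - 2)) (unit_vec (n - 1)) \<noteq> vzero"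
    using nf_bracket_top_coords(1) assms by (metis vzero_def)
  show "nf_bracket n \<alpha> \<gamma> \<beta> (unit_vec k) (unit_vec (k + 1)) = vzero" if "4 \<le> k \<and> k < n - 2" for k
    using that by (intro nf_bracket_unit_vec_low) auto
qed

lemma assoc_triple_nf_bracket: "\<alpha> \<noteq> 0 \<Longrightarrow> assoc_triple n (nf_bracket n \<alpha> \<gamma> \<beta>) (n - 2) (n - 2)"
  unfolding assoc_triple_def
  using filiform_nf_bracket non_model_nf_bracket adapted_basis_unit_vec is_z1_nf_bracket is_z2_nf_bracket
  by blast

end

theorem mainTheorem3:
  fixes n :: nat
  assumes "n \<ge> 6"
  shows "(\<forall>B. assoc_triple n B (n - 2) (n - 2) \<longrightarrow>
            (\<exists>e \<alpha> \<gamma> \<beta>. adapted_basis n B e \<and> \<alpha> \<noteq> 0 \<and>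
               (\<forall>a b. 1 \<le> a \<and> a < b \<and> b \<le> n \<longrightarrow>
                  B (e a) (e b) = lcomb (thm_spec n \<alpha> \<gamma> \<beta> a b) e {1..n})))
       \<and> (\<forall>\<alpha> \<gamma> \<beta>. \<alpha> \<noteq> 0 \<longrightarrow>
            assoc_triple n (sc_bracket n (antisym_sc (thm_spec n \<alpha> \<gamma> \<beta>))) (n - 2) (n - 2))"
proof (intro conjI allI impI)
  fix B assume "assoc_triple n B (n - 2) (n - 2)"
  then obtain e where "lie_alg n B" and adapted: "adapted_basis n B e"
    and "is_z1 n B e (n - 2)" "is_z2 n B e (n - 2)"
    unfolding assoc_triple_def filiform_def by blast
  then interpret triple_n2 n B e using assms by unfold_locales auto
  show "\<exists>e \<alpha> \<gamma> \<beta>. adapted_basis n B e \<and> \<alpha> \<noteq> 0 \<and>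
      (\<forall>a b. 1 \<le> a \<and> a < b \<and> b \<le> n \<longrightarrow> B (e a) (e b) = lcomb (thm_spec n \<alpha> \<gamma> \<beta> a b) e {1..n})"
    using normal_form adapted by blast
next
  fix \<alpha> \<gamma> \<beta> :: complex assume "\<alpha> \<noteq> 0"
  interpret dim_ge_6 n using assms by unfold_locales
  show "assoc_triple n (nf_bracket n \<alpha> \<gamma> \<beta>) (n - 2) (n - 2)"
    using \<open>\<alpha> \<noteq> 0\<close> by (rule assoc_triple_nf_bracket)
qed

end
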